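(* (a) Let $1<p<2$. For all $x\in\mathbb{R}^n\setminus\{0\}$ and $y\in\mathbb{R}^n$, $$|x+y|^{p-2}(x+y)\cdot y\ge |x|^{p-2}x\cdot y+\omega_1|y|^2+(p-2)\omega_2(|x|-|x+y|)^2,$$ with $\omega_1=|x+y|^{p-2}$, $\omega_2=\frac{|x+y|^{p-1}}{(2-p)|x+y|+(p-1)|x|}$ if $|x|\le|x+y|$, and $\omega_1=\omega_2=|x|^{p-2}$ if $|x+y|\le|x|$. Moreover $\omega_1|y|^2+(p-2)\omega_2(|x|-|x+y|)^2\ge 0$, with equality only when $y=0$. (b) Let $p\ge2$. There exists $c_3=c_3(p)\in(0,\tfrac12]$ such that for all $x\in\mathbb{R}^n\setminus\{0\}$, $y\in\mathbb{R}^n$, $$|x+y|^{p-2}(x+y)\cdot y\ge |x|^{p-2}x\cdot y+\omega_3|y|^2+(p-2)\omega_4(|x|-|x+y|)^2,$$ where $\omega_3=\omega_4=|x|^{p-2}$ if $|x|\le|x+y|$; $\omega_3=\omega_4=\frac{|x+y|^{p-1}}{|x|}$ if $c_3^{\frac1{p-1}}|x|\le|x+y|\le|x|$; and $\omega_3=c_3|x|^{p-2}$, $\omega_4=\frac{|x+y|^{p-1}}{|x|}$ if $|x+y|\le c_3^{\frac1{p-1}}|x|$.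
   Context: Here $x\cdot y$ is the Euclidean inner product on $\mathbb{R}^n$ and $|\cdot|$ the Euclidean norm. *)

theory Defs
  imports "HOL-Analysis.Analysis"
begin

text \<open>Weights, written in terms of r = |x| and s = |x+y|.  The case distinctions in the
paper overlap only on boundaries where the formulas agree, so if-then-else is faithful.\<close>

definition omega1 :: "real \<Rightarrow> real \<Rightarrow> real \<Rightarrow> real" where
  "omega1 p r s = (if r \<le> s then s powr (p - 2) else r powr (p - 2))"

definition omega2 :: "real \<Rightarrow> real \<Rightarrow> real \<Rightarrow> real" where
  "omega2 p r s = (if r \<le> s then s powr (p - 1) / ((2 - p) * s + (p - 1) * r)
                   else r powr (p - 2))"

definition omega3 :: "real \<Rightarrow> real \<Rightarrow> real \<Rightarrow> real \<Rightarrow> real" where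
  "omega3 p c r s = (if r \<le> s then r powr (p - 2)
                     else if c powr (1 / (p - 1)) * r \<le> s then s powr (p - 1) / r
                     else c * r powr (p - 2))"

definition omega4 :: "real \<Rightarrow> real \<Rightarrow> real \<Rightarrow> real \<Rightarrow> real" where
  "omega4 p c r s = (if r \<le> s then r powr (p - 2) else s powr (p - 1) / r)"

text \<open>Explicit coordinates for R^n (vectors indexed by i < n), used in part (b) so that the
constant c3 can be chosen independently of the dimension n.\<close>

definition dotn :: "nat \<Rightarrow> (nat \<Rightarrow> real) \<Rightarrow> (nat \<Rightarrow> real) \<Rightarrow> real" where
  "dotn n x y = (\<Sum>i<n. x i * y i)"

definition normn :: "nat \<Rightarrow> (nat \<Rightarrow> real) \<Rightarrow> real" where
  "normn n x = sqrt (dotn n x x)"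

end

theory Submission
  imports Defs
begin

text \<open>The difference of the two sides depends on x and y only through r = |x|, s = |x + y|
and u = x \<bullet> (x + y), and it is affine in u. Since |u| \<le> r s, it suffices to check the
collinear configurations u = r s and u = - r s, where the inequality reduces to one-variable
bounds for t^(p - 1) and t^p: their tangent lines lie above them by concavity when 1 < p < 2
and below them by convexity when p \<ge> 2. In part (b) the constant c3 = 1/p works. The remainder
in (a) dominates (omega1 + (p - 2) omega2) |y|^2, because (|x| - |x + y|)^2 \<le> |y|^2 and p < 2,
and this coefficient is positive.\<close>

lemma powr_eq_mult_powr_minus_one:
  fixes x e :: real
  assumes "0 \<le> x"
  shows "x powr e = x * x powr (e - 1)"
  using assms powr_add[of x "e - 1" 1] by (cases "x = 0") (simp_all add: powr_one)

lemma powr_le_tangent: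
  fixes q t x :: real
  assumes "0 \<le> q" "q \<le> 1" "0 < t" "0 \<le> x"
  shows "x powr q \<le> t powr q + q * t powr (q - 1) * (x - t)"
proof (cases "x = 0")
  case True
  have "q * t powr q \<le> t powr q" using assms by (simp add: mult_left_le_one_le)
  then show ?thesis using True assms powr_eq_mult_powr_minus_one[of t q] by (simp add: algebra_simps)
next
  case False
  have "x powr q * t powr (1 - q) \<le> q * x + (1 - q) * t"
    using Youngs_inequality_0[of q "1 - q" x t] assms False by simp
  then have "x powr q * t powr (1 - q) * t powr (q - 1) \<le> (q * x + (1 - q) * t) * t powr (q - 1)"
    by (rule mult_right_mono) simp
  moreover have "t powr (1 - q) * t powr (q - 1) = 1"
    using assms by (simp flip: powr_add)
  ultimately show ?thesis
    using powr_eq_mult_powr_minus_one[of t q] assms by (simp add: algebra_simps)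
qed

lemma tangent_le_powr:
  fixes e t x :: real
  assumes "1 \<le> e" "0 < t" "0 < x"
  shows "t powr e + e * t powr (e - 1) * (x - t) \<le> x powr e"
proof -
  have "e * t powr (e - 1) * (x - t) \<le> x powr e - t powr e"
    using assms
    by (intro convex_on_imp_above_tangent[where A = "{0<..}"] powr_convex)
       (auto intro!: derivative_eq_intros simp: interior_open)
  then show ?thesis by simp
qed

definition scalar_lower_bound :: "real \<Rightarrow> real \<Rightarrow> real \<Rightarrow> real \<Rightarrow> real \<Rightarrow> bool" where
  "scalar_lower_bound p w1 w2 r s \<longleftrightarrow>
     (\<forall>u. \<bar>u\<bar> \<le> r * s \<longrightarrow>
        r powr (p - 2) * (u - r\<^sup>2) + w1 * (s\<^sup>2 - 2 * u + r\<^sup>2) + (p - 2) * w2 * (r - s)\<^sup>2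
          \<le> s powr (p - 2) * (s\<^sup>2 - u))"

lemma affine_nonneg_between_endpoints:
  fixes A B u m :: real
  assumes "\<bar>u\<bar> \<le> m" "0 \<le> A + B * m" "0 \<le> A - B * m"
  shows "0 \<le> A + B * u"
proof (cases "0 \<le> B")
  case True
  then have "B * (- m) \<le> B * u" using assms(1) by (intro mult_left_mono) auto
  then show ?thesis using assms by simp
next
  case False
  then have "B * m \<le> B * u" using assms(1) by (intro mult_left_mono_neg) auto
  then show ?thesis using assms by simp
qed

lemma scalar_lower_boundI:
  fixes p w1 w2 r s :: real
  assumes "0 \<le> r" "0 \<le> s"
    and at_aligned: "(w1 + (p - 2) * w2) * (s - r)\<^sup>2 \<le> (s - r) * (s powr (p - 1) - r powr (p - 1))"
    and at_opposite: "w1 * (s + r)\<^sup>2 + (p - 2) * w2 * (r - s)\<^sup>2 \<le> (s + r) * (s powr (p - 1) + r powr (p - 1))"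
  shows "scalar_lower_bound p w1 w2 r s"
  unfolding scalar_lower_bound_def
proof (intro allI impI)
  fix u :: real
  assume u: "\<bar>u\<bar> \<le> r * s"
  define a b where "a = s powr (p - 2)" and "b = r powr (p - 2)"
  have S: "s powr (p - 1) = s * a" and R: "r powr (p - 1) = r * b"
    unfolding a_def b_def using assms powr_eq_mult_powr_minus_one[of _ "p - 1"] by simp_all
  define A B where "A = a * s\<^sup>2 + b * r\<^sup>2 - w1 * (s\<^sup>2 + r\<^sup>2) - (p - 2) * w2 * (r - s)\<^sup>2"
    and "B = 2 * w1 - a - b"
  have "0 \<le> A + B * (r * s)"
    using at_aligned unfolding S R A_def B_def by (simp add: algebra_simps power2_eq_square)
  moreover have "0 \<le> A - B * (r * s)"
    using at_opposite unfolding S R A_def B_def by (simp add: algebra_simps power2_eq_square)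
  ultimately have "0 \<le> A + B * u" using u by (rule affine_nonneg_between_endpoints[rotated])
  then show "r powr (p - 2) * (u - r\<^sup>2) + w1 * (s\<^sup>2 - 2 * u + r\<^sup>2) + (p - 2) * w2 * (r - s)\<^sup>2
          \<le> s powr (p - 2) * (s\<^sup>2 - u)"
    unfolding A_def B_def a_def b_def by (simp add: algebra_simps power2_eq_square)
qed

lemma scalar_lower_bound_sub_quadratic_expanding:
  fixes p r s :: real
  assumes p: "1 < p" "p < 2" and rs: "0 < r" "r \<le> s"
  shows "scalar_lower_bound p (s powr (p - 2)) (s powr (p - 1) / ((2 - p) * s + (p - 1) * r)) r s"
proof (rule scalar_lower_boundI)
  define a b D where "a = s powr (p - 2)" and "b = r powr (p - 2)"
    and "D = (2 - p) * s + (p - 1) * r"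
  define S R where "S = s powr (p - 1)" and "R = r powr (p - 1)"
  have s: "0 < s" using rs by simp
  have Sa: "S = s * a" and Rb: "R = r * b"
    unfolding S_def R_def a_def b_def using s rs powr_eq_mult_powr_minus_one[of _ "p - 1"] by simp_all
  have "0 < (p - 1) * r" "0 \<le> (2 - p) * s" "(p - 1) * r \<le> (p - 1) * s"
    using p rs by (auto intro: mult_left_mono)
  then have D: "0 < D" "D \<le> s" unfolding D_def by (auto simp: algebra_simps)
  have tangent: "R \<le> S + (p - 1) * a * (r - s)"
    using powr_le_tangent[of "p - 1" s r] p rs s unfolding R_def S_def a_def by simp
  have a: "0 < a" unfolding a_def using s by simp
  have "a \<le> S / D" using D a Sa by (simp add: field_simps mult_left_mono)
  then have "(p - 2) * (S / D) \<le> (p - 2) * a" using p by (intro mult_left_mono_neg) auto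
  then have "(a + (p - 2) * (S / D)) * (s - r)\<^sup>2 \<le> (p - 1) * a * (s - r)\<^sup>2"
    by (intro mult_right_mono) (auto simp: algebra_simps)
  also have "\<dots> \<le> (s - r) * (S - R)"
    using tangent rs mult_left_mono[of "(p - 1) * a * (s - r)" "S - R" "s - r"]
    by (simp add: algebra_simps power2_eq_square)
  finally show "(a + (p - 2) * (S / D)) * (s - r)\<^sup>2 \<le> (s - r) * (S - R)" .
  have "a \<le> b" unfolding a_def b_def using p rs by (intro powr_mono2') auto
  then have "a * (s + r)\<^sup>2 \<le> (s + r) * (S + R)"
    using Sa Rb rs mult_left_mono[of "r * a" "r * b" "s + r"]
    by (simp add: algebra_simps power2_eq_square)
  moreover have "(p - 2) * (S / D) * (r - s)\<^sup>2 \<le> 0"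
    using p D unfolding S_def by (intro mult_nonpos_nonneg) auto
  ultimately show "a * (s + r)\<^sup>2 + (p - 2) * (S / D) * (r - s)\<^sup>2 \<le> (s + r) * (S + R)"
    by linarith
qed (use rs in auto)

lemma scalar_lower_bound_sub_quadratic_contracting:
  fixes p r s :: real
  assumes p: "1 < p" "p < 2" and rs: "0 \<le> s" "s \<le> r" "0 < r"
  shows "scalar_lower_bound p (r powr (p - 2)) (r powr (p - 2)) r s"
proof (rule scalar_lower_boundI)
  define b S R where "b = r powr (p - 2)" and "S = s powr (p - 1)" and "R = r powr (p - 1)"
  have Rb: "R = r * b"
    unfolding R_def b_def using rs powr_eq_mult_powr_minus_one[of r "p - 1"] by simp
  have tangent: "S \<le> R + (p - 1) * b * (s - r)"
    using powr_le_tangent[of "p - 1" r s] p rs unfolding R_def S_def b_def by simp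
  have "(p - 1) * b * (r - s) \<le> R - S" using tangent by (simp add: algebra_simps)
  then have "(r - s) * ((p - 1) * b * (r - s)) \<le> (r - s) * (R - S)"
    using rs by (intro mult_left_mono) auto
  then show "(b + (p - 2) * b) * (s - r)\<^sup>2 \<le> (s - r) * (S - R)"
    by (simp add: algebra_simps power2_eq_square)
  have "s * b \<le> S"
  proof (cases "s = 0")
    case False
    then have "b \<le> s powr (p - 2)" unfolding b_def using p rs by (intro powr_mono2') auto
    then show ?thesis
      using rs powr_eq_mult_powr_minus_one[of s "p - 1"] unfolding S_def by (simp add: mult_left_mono)
  qed (simp add: S_def)
  then have "b * (s + r)\<^sup>2 \<le> (s + r) * (S + R)"
    using Rb rs mult_left_mono[of "s * b" S "s + r"] by (simp add: algebra_simps power2_eq_square)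
  moreover have "(p - 2) * b * (r - s)\<^sup>2 \<le> 0"
    using p unfolding b_def by (intro mult_nonpos_nonneg) auto
  ultimately show "b * (s + r)\<^sup>2 + (p - 2) * b * (r - s)\<^sup>2 \<le> (s + r) * (S + R)"
    by linarith
qed (use rs in auto)

lemma scalar_lower_bound_super_quadratic_expanding:
  fixes p r s :: real
  assumes p: "2 \<le> p" and rs: "0 < r" "r \<le> s"
  shows "scalar_lower_bound p (r powr (p - 2)) (r powr (p - 2)) r s"
proof (rule scalar_lower_boundI)
  define b S R where "b = r powr (p - 2)" and "S = s powr (p - 1)" and "R = r powr (p - 1)"
  have b: "0 < b" unfolding b_def using rs by simp
  have Rb: "R = r * b"
    unfolding R_def b_def using rs powr_eq_mult_powr_minus_one[of r "p - 1"] by simp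
  have tangent: "R + (p - 1) * b * (s - r) \<le> S"
    using tangent_le_powr[of "p - 1" r s] p rs unfolding R_def S_def b_def by simp
  then have "(s - r) * ((p - 1) * b * (s - r)) \<le> (s - r) * (S - R)"
    using rs by (intro mult_left_mono) auto
  then show "(b + (p - 2) * b) * (s - r)\<^sup>2 \<le> (s - r) * (S - R)"
    by (simp add: algebra_simps power2_eq_square)
  have "(r - s)\<^sup>2 \<le> (s - r) * (s + r)"
    using rs by (simp add: power2_eq_square algebra_simps mult_left_mono)
  then have "(p - 2) * b * (r - s)\<^sup>2 \<le> (p - 2) * b * ((s - r) * (s + r))"
    using p b by (intro mult_left_mono) auto
  moreover have "(s + r) * (2 * R + (p - 1) * b * (s - r)) \<le> (s + r) * (S + R)"
    using tangent rs by (intro mult_left_mono) auto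
  moreover have "b * (s + r)\<^sup>2 + (p - 2) * b * ((s - r) * (s + r))
      = (s + r) * (2 * R + (p - 1) * b * (s - r))"
    unfolding Rb by (simp add: algebra_simps power2_eq_square)
  ultimately show "b * (s + r)\<^sup>2 + (p - 2) * b * (r - s)\<^sup>2 \<le> (s + r) * (S + R)"
    by linarith
qed (use rs in auto)

lemma scalar_lower_bound_super_quadratic_contracting:
  fixes p r s :: real
  assumes p: "2 \<le> p" and rs: "0 < s" "s \<le> r"
  shows "scalar_lower_bound p (s powr (p - 1) / r) (s powr (p - 1) / r) r s"
proof (rule scalar_lower_boundI)
  define v S R where "v = s powr (p - 1) / r" and "S = s powr (p - 1)" and "R = r powr (p - 1)"
  have r: "0 < r" using rs by simp
  have v: "0 \<le> v" and Sv: "S = v * r" unfolding v_def S_def using r by simp_all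
  have "s powr p + p * s powr (p - 1) * (r - s) \<le> r powr p"
    using tangent_le_powr[of p s r] p rs by simp
  moreover have "s powr p = s * S" "r powr p = r * R"
    unfolding S_def R_def using rs powr_eq_mult_powr_minus_one[of _ p] by simp_all
  moreover have "r * (S + (p - 1) * v * (r - s)) = s * S + p * S * (r - s)"
    unfolding Sv by (simp add: algebra_simps)
  ultimately have "r * (S + (p - 1) * v * (r - s)) \<le> r * R" by (simp add: S_def)
  then have tangent: "S + (p - 1) * v * (r - s) \<le> R" using r by simp
  then have "(r - s) * ((p - 1) * v * (r - s)) \<le> (r - s) * (R - S)"
    using rs by (intro mult_left_mono) auto
  then show "(v + (p - 2) * v) * (s - r)\<^sup>2 \<le> (s - r) * (S - R)"
    by (simp add: algebra_simps power2_eq_square)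
  have "(r - s)\<^sup>2 \<le> (r - s) * (r + s)"
    using rs by (simp add: power2_eq_square algebra_simps mult_left_mono)
  then have "(p - 2) * v * (r - s)\<^sup>2 \<le> (p - 2) * v * ((r - s) * (r + s))"
    using p v by (intro mult_left_mono) auto
  moreover have "(s + r) * (2 * S + (p - 1) * v * (r - s)) \<le> (s + r) * (S + R)"
    using tangent rs by (intro mult_left_mono) auto
  moreover have "v * (s + r)\<^sup>2 + (p - 2) * v * ((r - s) * (r + s)) + 2 * v * (s + r) * (r - s)
      = (s + r) * (2 * S + (p - 1) * v * (r - s))"
    unfolding Sv by (simp add: algebra_simps power2_eq_square)
  moreover have "0 \<le> 2 * v * (s + r) * (r - s)" using v rs by simp
  ultimately show "v * (s + r)\<^sup>2 + (p - 2) * v * (r - s)\<^sup>2 \<le> (s + r) * (S + R)"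
    by linarith
qed (use rs in auto)

lemma scalar_lower_bound_super_quadratic_collapsing:
  fixes p c r s :: real
  assumes p: "2 \<le> p" and c: "0 < c" "p * c \<le> 1" and rs: "0 \<le> s" "s \<le> r" "0 < r"
    and small: "s powr (p - 1) \<le> c * r powr (p - 1)"
  shows "scalar_lower_bound p (c * r powr (p - 2)) (s powr (p - 1) / r) r s"
proof (rule scalar_lower_boundI)
  define b v S R where "b = r powr (p - 2)" and "v = s powr (p - 1) / r"
    and "S = s powr (p - 1)" and "R = r powr (p - 1)"
  have b: "0 < b" unfolding b_def using rs by simp
  have v: "0 \<le> v" and Sv: "S = v * r" unfolding v_def S_def using rs by simp_all
  have Rb: "R = r * b"
    unfolding R_def b_def using rs powr_eq_mult_powr_minus_one[of r "p - 1"] by simp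
  have "S \<le> c * R" using small unfolding S_def R_def .
  then have "v * r \<le> c * b * r" unfolding Sv Rb by (simp add: ac_simps)
  then have vb: "v \<le> c * b" using rs by simp
  have "(p - 2) * v \<le> (p - 2) * (c * b)" using vb p by (intro mult_left_mono) auto
  then have "(c * b + (p - 2) * v) * (r - s) \<le> (p - 1) * c * b * (r - s)"
    using rs by (intro mult_right_mono) (auto simp: algebra_simps)
  also have "\<dots> \<le> (p - 1) * c * b * r"
    using p c b rs by (intro mult_left_mono) auto
  also have "\<dots> = (p - 1) * c * R" unfolding Rb by simp
  also have "\<dots> \<le> R - S"
    using c small mult_right_mono[of "(p - 1) * c" "1 - c" R] unfolding R_def S_def
    by (simp add: algebra_simps)
  finally have "(r - s) * ((c * b + (p - 2) * v) * (r - s)) \<le> (r - s) * (R - S)"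
    using rs by (intro mult_left_mono) auto
  then show "(c * b + (p - 2) * v) * (s - r)\<^sup>2 \<le> (s - r) * (S - R)"
    by (simp add: algebra_simps power2_eq_square)
  have "c * b * (s + r)\<^sup>2 \<le> c * b * ((s + r) * (2 * r))"
    using c b rs by (intro mult_left_mono) (auto simp: power2_eq_square)
  moreover have "(r - s)\<^sup>2 \<le> r * (r + s)"
  proof -
    have "s * s \<le> r * s" "0 \<le> r * s" using rs by (auto intro: mult_right_mono)
    then show ?thesis by (simp add: power2_eq_square algebra_simps)
  qed
  then have "v * (r - s)\<^sup>2 \<le> c * b * (r * (r + s))"
    using vb v rs by (intro mult_mono) auto
  then have "(p - 2) * v * (r - s)\<^sup>2 \<le> (p - 2) * (c * b * (r * (r + s)))"
    using p by (simp add: mult_left_mono mult.assoc)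
  moreover have "p * c * (R * (s + r)) \<le> R * (s + r)"
    using c mult_right_mono[of "p * c" 1 "R * (s + r)"] rs unfolding R_def by simp
  moreover have "R * (s + r) \<le> (s + r) * (S + R)"
    using rs unfolding S_def by (simp add: algebra_simps)
  ultimately show "c * b * (s + r)\<^sup>2 + (p - 2) * v * (r - s)\<^sup>2 \<le> (s + r) * (S + R)"
    unfolding Rb by (simp add: algebra_simps)
qed (use rs in auto)

lemma scalar_lower_bound_omega12:
  fixes p r s :: real
  assumes "1 < p" "p < 2" "0 < r" "0 \<le> s"
  shows "scalar_lower_bound p (omega1 p r s) (omega2 p r s) r s"
  using assms scalar_lower_bound_sub_quadratic_expanding[of p r s]
    scalar_lower_bound_sub_quadratic_contracting[of p s r]
  unfolding omega1_def omega2_def by auto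

lemma omega2_nonneg:
  fixes p r s :: real
  assumes "1 < p" "p < 2" "0 < r" "0 \<le> s"
  shows "0 \<le> omega2 p r s"
  using assms unfolding omega2_def by (auto intro!: divide_nonneg_pos add_nonneg_pos)

lemma omega12_combination_pos:
  fixes p r s :: real
  assumes p: "1 < p" "p < 2" and rs: "0 < r" "0 \<le> s"
  shows "0 < omega1 p r s + (p - 2) * omega2 p r s"
proof (cases "r \<le> s")
  case True
  define a D where "a = s powr (p - 2)" and "D = (2 - p) * s + (p - 1) * r"
  have "0 < (p - 1) * r" "0 \<le> (2 - p) * s" using p rs by auto
  then have D: "0 < D" unfolding D_def by linarith
  have "omega1 p r s + (p - 2) * omega2 p r s = a + (p - 2) * (s * a) / D"
    using True rs powr_eq_mult_powr_minus_one[of s "p - 1"]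
    unfolding omega1_def omega2_def a_def D_def by simp
  also have "\<dots> = (p - 1) * r * a / D"
    using D unfolding D_def by (simp add: field_simps)
  also have "\<dots> > 0" using p rs D True unfolding a_def by simp
  finally show ?thesis .
next
  case False
  then show ?thesis using p rs unfolding omega1_def omega2_def by (simp add: algebra_simps)
qed

lemma scalar_lower_bound_omega34:
  fixes p c r s :: real
  assumes p: "2 \<le> p" and c: "0 < c" "p * c \<le> 1" and rs: "0 < r" "0 \<le> s"
  shows "scalar_lower_bound p (omega3 p c r s) (omega4 p c r s) r s"
proof -
  consider "r \<le> s" | "s < r" "c powr (1 / (p - 1)) * r \<le> s"
    | "s < r" "s < c powr (1 / (p - 1)) * r"
    by fastforce
  then show ?thesis
  proof cases
    case 1
    then show ?thesis
      using scalar_lower_bound_super_quadratic_expanding[OF p rs(1)] unfolding omega3_def omega4_def by simp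
  next
    case 2
    moreover have "0 < c powr (1 / (p - 1)) * r" using c rs by simp
    ultimately have "0 < s" by linarith
    then show ?thesis
      using 2 scalar_lower_bound_super_quadratic_contracting[OF p] unfolding omega3_def omega4_def by simp
  next
    case 3
    then have "s powr (p - 1) \<le> (c powr (1 / (p - 1)) * r) powr (p - 1)"
      using p rs by (intro powr_mono2) auto
    also have "\<dots> = c * r powr (p - 1)"
      using c rs p by (simp add: powr_mult powr_powr)
    finally show ?thesis
      using 3 scalar_lower_bound_super_quadratic_collapsing[OF p c rs(2) _ rs(1)] c rs
      unfolding omega3_def omega4_def by auto
  qed
qed

lemma inner_lower_bound:
  fixes x y :: "'a::real_inner"
  assumes "scalar_lower_bound p w1 w2 (norm x) (norm (x + y))"
  shows "norm x powr (p - 2) * (x \<bullet> y) + w1 * (norm y)\<^sup>2 + (p - 2) * w2 * (norm x - norm (x + y))\<^sup>2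
           \<le> norm (x + y) powr (p - 2) * ((x + y) \<bullet> y)"
proof -
  define u where "u = x \<bullet> (x + y)"
  have "\<bar>u\<bar> \<le> norm x * norm (x + y)" unfolding u_def by (rule Cauchy_Schwarz_ineq2)
  moreover have "(x + y) \<bullet> y = (norm (x + y))\<^sup>2 - u" "x \<bullet> y = u - (norm x)\<^sup>2"
    "(norm y)\<^sup>2 = (norm (x + y))\<^sup>2 - 2 * u + (norm x)\<^sup>2"
    unfolding u_def power2_norm_eq_inner by (simp_all add: algebra_simps inner_commute)
  ultimately show ?thesis using assms unfolding scalar_lower_bound_def by simp
qed

lemma dotn_add_left: "dotn n (\<lambda>i. x i + y i) z = dotn n x z + dotn n y z"
  unfolding dotn_def by (simp add: algebra_simps sum.distrib)

lemma dotn_commute: "dotn n x y = dotn n y x"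
  unfolding dotn_def by (simp add: mult.commute)

lemma dotn_self_nonneg: "0 \<le> dotn n x x"
  unfolding dotn_def by (simp add: sum_nonneg)

lemma normn_nonneg: "0 \<le> normn n x"
  unfolding normn_def using dotn_self_nonneg by simp

lemma normn_sq: "(normn n x)\<^sup>2 = dotn n x x"
  unfolding normn_def using dotn_self_nonneg by simp

lemma dotn_cauchy_schwarz: "\<bar>dotn n x y\<bar> \<le> normn n x * normn n y"
proof -
  have "\<bar>dotn n x y\<bar> \<le> (\<Sum>i<n. \<bar>x i\<bar> * \<bar>y i\<bar>)"
    unfolding dotn_def by (metis (no_types, lifting) abs_mult sum.cong sum_abs)
  also have "\<dots> \<le> L2_set x {..<n} * L2_set y {..<n}" by (rule L2_set_mult_ineq)
  also have "\<dots> = normn n x * normn n y"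
    unfolding L2_set_def normn_def dotn_def by (simp add: power2_eq_square)
  finally show ?thesis .
qed

lemma normn_pos:
  assumes "i < n" "x i \<noteq> 0"
  shows "0 < normn n x"
proof -
  have "0 < (x i)\<^sup>2" using assms by simp
  also have "\<dots> = x i * x i" by (rule power2_eq_square)
  also have "\<dots> \<le> dotn n x x" unfolding dotn_def by (rule member_le_sum) (use assms in auto)
  finally show ?thesis unfolding normn_def by simp
qed

lemma dotn_lower_bound:
  fixes x y :: "nat \<Rightarrow> real"
  defines "z \<equiv> \<lambda>i. x i + y i"
  assumes "scalar_lower_bound p w1 w2 (normn n x) (normn n z)"
  shows "normn n x powr (p - 2) * dotn n x y + w1 * (normn n y)\<^sup>2
           + (p - 2) * w2 * (normn n x - normn n z)\<^sup>2
           \<le> normn n z powr (p - 2) * dotn n z y"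
proof -
  define u where "u = dotn n x z"
  have "\<bar>u\<bar> \<le> normn n x * normn n z" unfolding u_def by (rule dotn_cauchy_schwarz)
  moreover have "dotn n z y = (normn n z)\<^sup>2 - u" "dotn n x y = u - (normn n x)\<^sup>2"
    "(normn n y)\<^sup>2 = (normn n z)\<^sup>2 - 2 * u + (normn n x)\<^sup>2"
    unfolding u_def normn_sq z_def dotn_add_left using dotn_commute[of n x y]
    by (simp_all add: dotn_commute[of n _ "\<lambda>i. x i + y i"] dotn_add_left)
  ultimately show ?thesis using assms unfolding scalar_lower_bound_def by simp
qed

lemma omega12_remainder_nonneg:
  fixes x y :: "'a::real_normed_vector"
  assumes p: "1 < p" "p < 2" and x: "x \<noteq> 0"
  defines "E \<equiv> omega1 p (norm x) (norm (x + y)) * (norm y)\<^sup>2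
                + (p - 2) * omega2 p (norm x) (norm (x + y)) * (norm x - norm (x + y))\<^sup>2"
  shows "0 \<le> E" and "E = 0 \<Longrightarrow> y = 0"
proof -
  define \<kappa> where "\<kappa> = omega1 p (norm x) (norm (x + y)) + (p - 2) * omega2 p (norm x) (norm (x + y))"
  have \<kappa>: "0 < \<kappa>" unfolding \<kappa>_def using omega12_combination_pos p x by simp
  have "(norm x - norm (x + y))\<^sup>2 \<le> (norm y)\<^sup>2"
    using norm_triangle_ineq3[of "x + y" x] by (simp add: abs_le_square_iff[symmetric] abs_minus_commute)
  then have "(p - 2) * omega2 p (norm x) (norm (x + y)) * (norm y)\<^sup>2
      \<le> (p - 2) * omega2 p (norm x) (norm (x + y)) * (norm x - norm (x + y))\<^sup>2"
    using p x omega2_nonneg[of p "norm x" "norm (x + y)"]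
    by (intro mult_left_mono_neg) (auto intro: mult_nonpos_nonneg)
  then have E: "\<kappa> * (norm y)\<^sup>2 \<le> E" unfolding E_def \<kappa>_def by (simp add: algebra_simps)
  moreover have "0 \<le> \<kappa> * (norm y)\<^sup>2" using \<kappa> by simp
  ultimately show "0 \<le> E" by linarith
  show "y = 0" if "E = 0" using E \<kappa> that by (simp add: mult_le_0_iff)
qed

theorem mainTheorem4:
  shows "(\<forall>p::real. 1 < p \<and> p < 2 \<longrightarrow>
           (\<forall>(x::'a::euclidean_space) y. x \<noteq> 0 \<longrightarrow>
              norm (x + y) powr (p - 2) * ((x + y) \<bullet> y)
                \<ge> norm x powr (p - 2) * (x \<bullet> y)
                   + omega1 p (norm x) (norm (x + y)) * (norm y)\<^sup>2
                   + (p - 2) * omega2 p (norm x) (norm (x + y)) * (norm x - norm (x + y))\<^sup>2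
            \<and> omega1 p (norm x) (norm (x + y)) * (norm y)\<^sup>2
                + (p - 2) * omega2 p (norm x) (norm (x + y)) * (norm x - norm (x + y))\<^sup>2 \<ge> 0
            \<and> (omega1 p (norm x) (norm (x + y)) * (norm y)\<^sup>2
                + (p - 2) * omega2 p (norm x) (norm (x + y)) * (norm x - norm (x + y))\<^sup>2 = 0
                \<longrightarrow> y = 0)))
   \<and> (\<forall>p::real. 2 \<le> p \<longrightarrow>
        (\<exists>c3. 0 < c3 \<and> c3 \<le> 1/2 \<and>
          (\<forall>n::nat. \<forall>x y :: nat \<Rightarrow> real. (\<exists>i<n. x i \<noteq> 0) \<longrightarrow>
             (let z = (\<lambda>i. x i + y i) in
              normn n z powr (p - 2) * dotn n z y
                \<ge> normn n x powr (p - 2) * dotn n x y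
                   + omega3 p c3 (normn n x) (normn n z) * (normn n y)\<^sup>2
                   + (p - 2) * omega4 p c3 (normn n x) (normn n z) * (normn n x - normn n z)\<^sup>2))))"
  apply (intro conjI allI impI)
  subgoal by (intro inner_lower_bound scalar_lower_bound_omega12) auto
  subgoal by (intro omega12_remainder_nonneg(1)) auto
  subgoal by (rule omega12_remainder_nonneg(2)) auto
  subgoal for p
    unfolding Let_def
    by (intro exI[of _ "1 / p"] conjI allI impI dotn_lower_bound scalar_lower_bound_omega34)
       (auto simp: normn_nonneg intro: normn_pos)
  done

end
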